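(* Let $\Gamma=\mathbb{Z}/2\times\mathbb{Z}$, let $S$ be a finite symmetric multiset of elements of $\Gamma$ not containing the identity and generating $\Gamma$, and let $a:\Gamma\curvearrowright X$ be a free Borel action on a standard Borel space $X$. If $(1,0)\in S$, then $\chi_B'(G(a,S))=|S|$.
   Context: $G(a,S)$ is the multigraph on $X$ with, for each $x$ and each occurrence of $\gamma$ in $S$, an edge between $x$ and $\gamma\cdot x$ (the occurrence of $\gamma$ at $x$ and the corresponding occurrence of $\gamma^{-1}$ at $\gamma\cdot x$ giving the same edge, so each vertex has degree $|S|$). $\chi_B'$ is the least number of colors in a Borel edge coloring, where distinct edges sharing a vertex receive distinct colors. *)

theory Defs
  imports "HOL-Analysis.Analysis" "HOL-Library.Multiset" "HOL-Library.Extended_Nat"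
begin

text \<open>The group Gamma = Z/2 x Z, with Z/2 represented by bool (False = 0, True = 1).\<close>
type_synonym gam = "bool \<times> int"

definition gmul :: "gam \<Rightarrow> gam \<Rightarrow> gam" where
  "gmul g h = ((fst g \<noteq> fst h), snd g + snd h)"

definition gone :: gam where
  "gone = (False, 0)"

definition ginv :: "gam \<Rightarrow> gam" where
  "ginv g = (fst g, - snd g)"

inductive_set gen_subgroup :: "gam set \<Rightarrow> gam set" for A where
  gen_one: "gone \<in> gen_subgroup A"
| gen_base: "g \<in> A \<Longrightarrow> g \<in> gen_subgroup A"
| gen_inv: "g \<in> gen_subgroup A \<Longrightarrow> ginv g \<in> gen_subgroup A"
| gen_mul: "g \<in> gen_subgroup A \<Longrightarrow> h \<in> gen_subgroup A \<Longrightarrow> gmul g h \<in> gen_subgroup A"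

definition symmetric_mset :: "gam multiset \<Rightarrow> bool" where
  "symmetric_mset S \<longleftrightarrow> (\<forall>g. count S g = count S (ginv g))"

text \<open>A (left) action of Gamma on X, Borel (each group element acts by a Borel map)
  and free. X is a standard Borel space, modelled as a Polish space with its Borel sets.\<close>
definition borel_action :: "(gam \<Rightarrow> 'x::polish_space \<Rightarrow> 'x) \<Rightarrow> bool" where
  "borel_action a \<longleftrightarrow>
     (\<forall>x. a gone x = x) \<and>
     (\<forall>g h x. a (gmul g h) x = a g (a h x)) \<and>
     (\<forall>g. a g \<in> borel_measurable borel)"

definition free_action :: "(gam \<Rightarrow> 'x \<Rightarrow> 'x) \<Rightarrow> bool" where
  "free_action a \<longleftrightarrow> (\<forall>g x. a g x = x \<longrightarrow> g = gone)"

text \<open>Half-edges of G(a,S) at a vertex x: occurrences (g,i) of g in S, i < count S g.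
  The half-edge (x,g,i) and the half-edge (a g x, ginv g, i) form the same edge.
  An edge colouring c with k colours assigns to each half-edge a colour < k, agrees on
  the two half-edges of each edge, and gives distinct colours to distinct half-edges at
  the same vertex (distinct edges at a vertex, by freeness).\<close>
definition borel_edge_coloring ::
    "(gam \<Rightarrow> 'x::polish_space \<Rightarrow> 'x) \<Rightarrow> gam multiset \<Rightarrow> nat \<Rightarrow> ('x \<Rightarrow> gam \<Rightarrow> nat \<Rightarrow> nat) \<Rightarrow> bool" where
  "borel_edge_coloring a S k c \<longleftrightarrow>
     (\<forall>x g i. i < count S g \<longrightarrow> c x g i < k) \<and>
     (\<forall>x g i. i < count S g \<longrightarrow> c (a g x) (ginv g) i = c x g i) \<and>
     (\<forall>x g i h j. i < count S g \<longrightarrow> j < count S h \<longrightarrow> (g, i) \<noteq> (h, j) \<longrightarrow> c x g i \<noteq> c x h j) \<and>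
     (\<forall>g i. i < count S g \<longrightarrow> (\<lambda>x. c x g i) \<in> measurable borel (count_space UNIV))"

text \<open>Borel chromatic index chi_B'(G(a,S)); infinity if no finite Borel edge colouring exists.\<close>
definition borel_chromatic_index :: "(gam \<Rightarrow> 'x::polish_space \<Rightarrow> 'x) \<Rightarrow> gam multiset \<Rightarrow> enat" where
  "borel_chromatic_index a S = (INF k \<in> {k::nat. \<exists>c. borel_edge_coloring a S k c}. enat k)"

end

theory Submission
  imports Defs
begin

text \<open>
  For a label \<open>g = (e, n)\<close> of \<open>S\<close> with \<open>n > 0\<close>, the edges labelled \<open>g\<close> form bi-infinite lines
  \<open>\<dots>, g\<^sup>-\<^sup>1 x, x, g x, \<dots>\<close>. If there are \<open>k\<close> such labels (with multiplicity) and \<open>m\<close> copies of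
  the flip \<open>t = (1, 0)\<close>, then \<open>|S| = 2k + m\<close>. Each line is coloured alternately with the two colours
  reserved for its label, except at sparse defect edges, which all share one extra colour.
  The defects are placed relative to a Borel marker set that is \<open>W\<close>-separated and \<open>W\<close>-dense along
  every coset of \<open>\<int>\<close>, obtained from a Borel maximal independent set as in Kechris, Solecki and
  Todorcevic. Every label owns its own window of offsets from the markers, the first half
  locating the tail and the second half the head of a defect edge; as the windows are disjoint and
  shorter than \<open>W\<close>, no vertex lies on two defect edges. The copies of \<open>t\<close> take the remaining
  colours, copy \<open>0\<close> the least colour free at its endpoint, which is the same at \<open>x\<close> and \<open>t x\<close> since
  the whole construction commutes with \<open>t\<close>. Conversely the \<open>|S|\<close> edges at a vertex need
  \<open>|S|\<close> distinct colours.
\<close>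

section \<open>Borel maximal independent sets\<close>

primrec greedy_indep :: "('a \<Rightarrow> nat) \<Rightarrow> ('a \<Rightarrow> 'a set) \<Rightarrow> nat \<Rightarrow> 'a set" where
  "greedy_indep c N 0 = {}"
| "greedy_indep c N (Suc n) = greedy_indep c N n \<union> {x. c x = n \<and> N x \<inter> greedy_indep c N n = {}}"

lemma greedy_indep_mono: "m \<le> n \<Longrightarrow> greedy_indep c N m \<subseteq> greedy_indep c N n"
  by (induction n) (auto simp: le_Suc_eq)

lemma greedy_indep_memD:
  "x \<in> greedy_indep c N n \<Longrightarrow> x \<in> greedy_indep c N (Suc (c x)) \<and> N x \<inter> greedy_indep c N (c x) = {}"
  by (induction n) auto

lemma greedy_indep_independent:
  assumes proper: "\<And>x y. y \<in> N x \<Longrightarrow> c y \<noteq> c x"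
    and N_sym: "\<And>x y. y \<in> N x \<Longrightarrow> x \<in> N y"
    and "x \<in> (\<Union>n. greedy_indep c N n)" "y \<in> (\<Union>n. greedy_indep c N n)"
  shows "y \<notin> N x"
proof
  assume y: "y \<in> N x"
  have x: "x \<in> greedy_indep c N (Suc (c x))" "N x \<inter> greedy_indep c N (c x) = {}"
    and y': "y \<in> greedy_indep c N (Suc (c y))" "N y \<inter> greedy_indep c N (c y) = {}"
    using assms(3,4) by (auto dest: greedy_indep_memD)
  show False
  proof (cases "c x < c y")
    case True
    then have "greedy_indep c N (Suc (c x)) \<subseteq> greedy_indep c N (c y)"
      by (intro greedy_indep_mono) simp
    then have "x \<in> greedy_indep c N (c y)"
      using x(1) by blast
    then show False
      using y'(2) N_sym[OF y] by blast
  next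
    case False
    then have "c y < c x"
      using proper[OF y] by simp
    then have "greedy_indep c N (Suc (c y)) \<subseteq> greedy_indep c N (c x)"
      by (intro greedy_indep_mono) simp
    then have "y \<in> greedy_indep c N (c x)"
      using y'(1) by blast
    then show False
      using x(2) y by blast
  qed
qed

lemma greedy_indep_maximal:
  "x \<in> (\<Union>n. greedy_indep c N n) \<or> N x \<inter> (\<Union>n. greedy_indep c N n) \<noteq> {}"
proof (cases "N x \<inter> greedy_indep c N (c x) = {}")
  case True
  then have "x \<in> greedy_indep c N (Suc (c x))"
    by simp
  then show ?thesis
    by blast
next
  case False
  then show ?thesis
    by blast
qed

lemma borel_proper_colouring_nat:
  fixes f :: "'i \<Rightarrow> 'a::{second_countable_topology, t1_space} \<Rightarrow> 'a"
  assumes "finite F"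
    and [measurable]: "\<And>h. f h \<in> borel_measurable borel"
    and no_fix: "\<And>h x. h \<in> F \<Longrightarrow> f h x \<noteq> x"
  obtains c :: "'a \<Rightarrow> nat" where "c \<in> measurable borel (count_space UNIV)"
    and "\<And>h x. h \<in> F \<Longrightarrow> c (f h x) \<noteq> c x"
proof -
  obtain \<B> :: "'a set set" where \<B>: "countable \<B>" "topological_basis \<B>"
    using ex_countable_basis by blast
  then have "\<B> \<noteq> {}"
    by (metis empty_iff open_UNIV topological_basisE UNIV_I)
  define B where "B = from_nat_into \<B>"
  have [measurable]: "B n \<in> sets borel" for n
    using topological_basis_open[OF \<B>(2) from_nat_into[OF \<open>\<B> \<noteq> {}\<close>]] by (simp add: B_def)
  have B_sep: "\<exists>n. x \<in> B n \<and> B n \<subseteq> U" if U: "open U" "x \<in> U" for U x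
  proof -
    obtain V where "V \<in> \<B>" "x \<in> V" "V \<subseteq> U"
      using topological_basisE[OF \<B>(2) U] by metis
    moreover have "V \<in> range B"
      using \<open>V \<in> \<B>\<close> range_from_nat_into[OF \<open>\<B> \<noteq> {}\<close> \<B>(1)] by (simp add: B_def)
    ultimately show ?thesis
      by auto
  qed
  define c where "c x = (LEAST n. x \<in> B n \<and> (\<forall>h\<in>F. f h x \<notin> B n))" for x
  have "\<exists>n. x \<in> B n \<and> (\<forall>h\<in>F. f h x \<notin> B n)" for x
  proof -
    have "open (- (\<lambda>h. f h x) ` F)"
      using \<open>finite F\<close> by (simp add: finite_imp_closed open_Compl)
    moreover have "x \<in> - (\<lambda>h. f h x) ` F"
      using no_fix by (metis ComplI imageE)
    ultimately obtain n where "x \<in> B n" "B n \<subseteq> - (\<lambda>h. f h x) ` F"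
      using B_sep by meson
    then show ?thesis
      by auto
  qed
  then have c: "x \<in> B (c x) \<and> (\<forall>h\<in>F. f h x \<notin> B (c x))" for x
    unfolding c_def by (rule LeastI_ex)
  have "c \<in> measurable borel (count_space UNIV)"
    unfolding c_def using \<open>finite F\<close> by measurable
  moreover have "c (f h x) \<noteq> c x" if "h \<in> F" for h x
  proof
    assume "c (f h x) = c x"
    then have "f h x \<in> B (c x)"
      using c[of "f h x"] by simp
    then show False
      using c[of x] that by blast
  qed
  ultimately show ?thesis
    using that by blast
qed

lemma borel_maximal_independent_set:
  fixes f :: "'i \<Rightarrow> 'a::{second_countable_topology, t1_space} \<Rightarrow> 'a"
  assumes "finite F"
    and [measurable]: "\<And>h. f h \<in> borel_measurable borel"
    and "\<And>h x. h \<in> F \<Longrightarrow> f h x \<noteq> x"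
    and symmetric: "\<And>h x. h \<in> F \<Longrightarrow> \<exists>h'\<in>F. f h' (f h x) = x"
  obtains I where "I \<in> sets borel"
    and "\<And>x h. x \<in> I \<Longrightarrow> h \<in> F \<Longrightarrow> f h x \<notin> I"
    and "\<And>x. x \<in> I \<or> (\<exists>h\<in>F. f h x \<in> I)"
proof -
  obtain c :: "'a \<Rightarrow> nat" where [measurable]: "c \<in> measurable borel (count_space UNIV)"
    and proper: "\<And>h x. h \<in> F \<Longrightarrow> c (f h x) \<noteq> c x"
    using borel_proper_colouring_nat assms(1-3) by blast
  define N where "N x = (\<lambda>h. f h x) ` F" for x
  have N_disjoint_iff: "N x \<inter> A = {} \<longleftrightarrow> (\<forall>h\<in>F. f h x \<notin> A)" for x A
    by (auto simp: N_def)
  have N_sym: "x \<in> N y" if "y \<in> N x" for x y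
  proof -
    obtain h where "h \<in> F" "y = f h x"
      using \<open>y \<in> N x\<close> by (auto simp: N_def)
    then obtain h' where "h' \<in> F" "f h' y = x"
      using symmetric by blast
    then show ?thesis
      unfolding N_def by blast
  qed
  have N_proper: "c y \<noteq> c x" if "y \<in> N x" for x y
    using that proper by (auto simp: N_def)
  have "greedy_indep c N n \<in> sets borel" for n
  proof (induction n)
    case (Suc n)
    note [measurable] = Suc
    have "greedy_indep c N (Suc n) =
        {x. x \<in> greedy_indep c N n \<or> (c x = n \<and> (\<forall>h\<in>F. f h x \<notin> greedy_indep c N n))}"
      by (auto simp: N_disjoint_iff)
    also have "\<dots> \<in> sets borel"
      using \<open>finite F\<close> by measurable
    finally show ?case .
  qed simp
  then have "(\<Union>n. greedy_indep c N n) \<in> sets borel"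
    by blast
  moreover have "f h x \<notin> (\<Union>n. greedy_indep c N n)"
    if "x \<in> (\<Union>n. greedy_indep c N n)" "h \<in> F" for x h
    using greedy_indep_independent[OF N_proper N_sym that(1)] that(2) by (auto simp: N_def)
  moreover have "x \<in> (\<Union>n. greedy_indep c N n) \<or> (\<exists>h\<in>F. f h x \<in> (\<Union>n. greedy_indep c N n))" for x
    using greedy_indep_maximal[of x c N] by (auto simp: N_def)
  ultimately show ?thesis
    using that by blast
qed

section \<open>Actions of \<open>\<int>/2 \<times> \<int>\<close> and marker sets\<close>

lemma gmul_pair [simp]: "gmul (s, z) (s', z') = (s \<noteq> s', z + z')"
  by (simp add: gmul_def)

lemma ginv_pair [simp]: "ginv (s, z) = (s, - z)"
  by (simp add: ginv_def)

lemma ginv_ginv [simp]: "ginv (ginv g) = g"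
  by (cases g) simp

locale gam_action =
  fixes a :: "gam \<Rightarrow> 'x::polish_space \<Rightarrow> 'x"
  assumes borel_action: "borel_action a"
begin

lemma act_one [simp]: "a (False, 0) x = x"
  using borel_action by (simp add: borel_action_def gone_def)

lemma act_act [simp]: "a (s, z) (a (s', z') x) = a (s \<noteq> s', z + z') x"
  using borel_action unfolding borel_action_def by (metis gmul_pair)

lemma act_measurable [measurable]: "a g \<in> borel_measurable borel"
  using borel_action unfolding borel_action_def by blast

lemma act_commute: "a g (a h x) = a h (a g x)"
proof -
  have "gmul g h = gmul h g"
    by (auto simp: gmul_def)
  then show ?thesis
    using borel_action unfolding borel_action_def by metis
qed

lemma act_ginv [simp]: "a (ginv g) (a g x) = x"
  by (cases g) simp

lemma act_funpow: "(a (s, z) ^^ k) x = a (s \<and> odd k, int k * z) x"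
  by (induction k; cases s) (simp_all add: algebra_simps)

end

definition marker_set :: "(gam \<Rightarrow> 'x::polish_space \<Rightarrow> 'x) \<Rightarrow> int \<Rightarrow> 'x set \<Rightarrow> bool" where
  "marker_set a W M \<longleftrightarrow> M \<in> sets borel \<and> (\<forall>x. a (True, 0) x \<in> M \<longleftrightarrow> x \<in> M) \<and>
     (\<forall>x g. x \<in> M \<longrightarrow> a g x \<in> M \<longrightarrow> snd g = 0 \<or> W \<le> \<bar>snd g\<bar>) \<and>
     (\<forall>x. \<exists>g. \<bar>snd g\<bar> < W \<and> a g x \<in> M)"

lemma (in gam_action) marker_set_of_maximal_independent:
  assumes "I \<in> sets borel" "0 < W"
    and indep: "\<And>x h. x \<in> I \<Longrightarrow> 0 < \<bar>snd h\<bar> \<Longrightarrow> \<bar>snd h\<bar> < W \<Longrightarrow> a h x \<notin> I"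
    and maximal: "\<And>x. x \<in> I \<or> (\<exists>h. 0 < \<bar>snd h\<bar> \<and> \<bar>snd h\<bar> < W \<and> a h x \<in> I)"
  shows "marker_set a W (I \<union> a (True, 0) -` I)"
  unfolding marker_set_def
proof (intro conjI allI impI)
  let ?M = "I \<union> a (True, 0) -` I"
  have sheet: "\<exists>s. a (s, 0) x \<in> I" if "x \<in> ?M" for x
    using that by (metis Un_iff act_one vimage_eq)
  show "?M \<in> sets borel"
    using assms(1) measurable_sets[OF act_measurable assms(1)] by simp
  show "a (True, 0) x \<in> ?M \<longleftrightarrow> x \<in> ?M" for x
    by auto
  show "snd g = 0 \<or> W \<le> \<bar>snd g\<bar>" if xg: "x \<in> ?M" "a g x \<in> ?M" for x g
  proof (rule ccontr)
    assume "\<not> (snd g = 0 \<or> W \<le> \<bar>snd g\<bar>)"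
    then have "0 < \<bar>snd (s1 \<noteq> (fst g \<noteq> s0), snd g)\<bar>" "\<bar>snd (s1 \<noteq> (fst g \<noteq> s0), snd g)\<bar> < W"
      for s0 s1
      by auto
    moreover obtain s0 s1 where "a (s0, 0) x \<in> I" "a (s1, 0) (a g x) \<in> I"
      using sheet xg by blast
    moreover have "a (s1, 0) (a g x) = a (s1 \<noteq> (fst g \<noteq> s0), snd g) (a (s0, 0) x)"
      by (cases g; cases s0; cases s1) simp_all
    ultimately show False
      using indep by metis
  qed
  show "\<exists>g. \<bar>snd g\<bar> < W \<and> a g x \<in> ?M" for x
  proof (cases "x \<in> I")
    case True
    then show ?thesis
      using \<open>0 < W\<close> by (intro exI[of _ "(False, 0)"]) simp
  next
    case False
    then obtain h where "\<bar>snd h\<bar> < W" "a h x \<in> I"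
      using maximal by blast
    then show ?thesis
      by blast
  qed
qed

lemma (in gam_action) marker_set_exists:
  assumes free: "free_action a" and "0 < W"
  obtains M where "marker_set a W M"
proof -
  define F where "F = {h::gam. 0 < \<bar>snd h\<bar> \<and> \<bar>snd h\<bar> < W}"
  have "F \<subseteq> UNIV \<times> {-W..W}"
    by (auto simp: F_def)
  then have "finite F"
    by (rule finite_subset) simp
  obtain I where "I \<in> sets borel"
    and "\<And>x h. x \<in> I \<Longrightarrow> h \<in> F \<Longrightarrow> a h x \<notin> I"
    and "\<And>x. x \<in> I \<or> (\<exists>h\<in>F. a h x \<in> I)"
  proof (rule borel_maximal_independent_set[of F a])
    show "a h x \<noteq> x" if "h \<in> F" for h x
    proof
      assume "a h x = x"
      then have "h = gone"
        using free unfolding free_action_def by blast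
      then show False
        using that by (simp add: F_def gone_def)
    qed
    show "\<exists>h'\<in>F. a h' (a h x) = x" if "h \<in> F" for h x
    proof
      show "ginv h \<in> F"
        using that by (cases h) (simp add: F_def)
    qed simp
  qed (use \<open>finite F\<close> in simp_all)
  then have "marker_set a W (I \<union> a (True, 0) -` I)"
    using \<open>0 < W\<close> by (intro marker_set_of_maximal_independent) (auto simp: F_def)
  then show ?thesis
    using that by blast
qed

section \<open>Half-edges and edge colourings\<close>

definition half_edges :: "'a multiset \<Rightarrow> ('a \<times> nat) set" where
  "half_edges S = {(g, i). i < count S g}"

lemma half_edges_eq_Sigma: "half_edges S = Sigma (set_mset S) (\<lambda>g. {..<count S g})"
  unfolding half_edges_def by (auto dest: gr_implies_not0 simp: not_in_iff)

lemma finite_half_edges [simp]: "finite (half_edges S)"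
  by (simp add: half_edges_eq_Sigma)

lemma card_half_edges: "card (half_edges S) = size S"
  by (simp add: half_edges_eq_Sigma card_SigmaI size_multiset_overloaded_eq)

lemma borel_edge_coloring_size_le:
  assumes "borel_edge_coloring a S k c"
  shows "size S \<le> k"
proof -
  let ?c = "\<lambda>(g, i). c undefined g i"
  have "c undefined g i \<noteq> c undefined h j"
    if "i < count S g" "j < count S h" "(g, i) \<noteq> (h, j)" for g i h j
    using assms that unfolding borel_edge_coloring_def by blast
  then have "inj_on ?c (half_edges S)"
    unfolding inj_on_def half_edges_def by fast
  moreover have "?c ` half_edges S \<subseteq> {..<k}"
    using assms by (auto simp: half_edges_def borel_edge_coloring_def)
  ultimately show ?thesis
    using card_inj_on_le[of ?c "half_edges S" "{..<k}"] by (simp add: card_half_edges)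
qed

lemma borel_chromatic_index_eq_size:
  assumes "borel_edge_coloring a S (size S) c"
  shows "borel_chromatic_index a S = enat (size S)"
  unfolding borel_chromatic_index_def
proof (rule antisym)
  show "(INF k\<in>{k. \<exists>c. borel_edge_coloring a S k c}. enat k) \<le> enat (size S)"
    using assms by (intro INF_lower2) auto
  show "enat (size S) \<le> (INF k\<in>{k. \<exists>c. borel_edge_coloring a S k c}. enat k)"
    by (auto intro!: INF_greatest dest: borel_edge_coloring_size_le)
qed

section \<open>A Borel edge colouring with \<open>|S|\<close> colours\<close>

lemma Least_not_in_le_card:
  fixes B :: "nat set"
  assumes "finite B"
  shows "(LEAST n. n \<notin> B) \<le> card B"
proof -
  have "\<not> {..card B} \<subseteq> B"
    using card_mono[OF \<open>finite B\<close>, of "{..card B}"] by auto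
  then obtain n where "n \<le> card B" "n \<notin> B"
    by auto
  then show ?thesis
    using Least_le[of "\<lambda>n. n \<notin> B" n] by simp
qed

lemma LeastI_not_in:
  fixes B :: "nat set"
  assumes "finite B"
  shows "(LEAST n. n \<notin> B) \<notin> B"
  using ex_new_if_finite[OF infinite_UNIV_nat assms] by (rule LeastI_ex)

lemma Least_funpow_Suc:
  assumes "\<exists>d. (f ^^ Suc d) x \<in> D" and "f x \<notin> D"
  shows "(LEAST d. (f ^^ Suc d) x \<in> D) = Suc (LEAST d. (f ^^ Suc d) (f x) \<in> D)"
proof -
  obtain n where "(f ^^ Suc n) x \<in> D"
    using assms(1) by blast
  then have "(LEAST d. (f ^^ Suc d) x \<in> D) = Suc (LEAST d. (f ^^ Suc (Suc d)) x \<in> D)"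
    using assms(2) by (intro Least_Suc[where P = "\<lambda>d. (f ^^ Suc d) x \<in> D" and n = n]) auto
  then show ?thesis
    by (simp only: funpow_Suc_right[of _ f] comp_apply)
qed

definition pos_half_edges :: "gam multiset \<Rightarrow> (gam \<times> nat) set" where
  "pos_half_edges S = {p \<in> half_edges S. 0 < snd (fst p)}"

lemma finite_pos_half_edges [simp]: "finite (pos_half_edges S)"
  by (simp add: pos_half_edges_def)

locale marked_gam_action = gam_action a for a :: "gam \<Rightarrow> 'x::polish_space \<Rightarrow> 'x" +
  fixes S :: "gam multiset" and L W :: int and M :: "'x set" and idx :: "gam \<times> nat \<Rightarrow> nat"
  assumes symmetric: "symmetric_mset S"
    and one_notin: "gone \<notin># S"
    and flip_in: "(True, 0) \<in># S"
    and L_bound: "\<And>g. g \<in># S \<Longrightarrow> \<bar>snd g\<bar> \<le> L"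
    and marker: "marker_set a W M"
    and windows_le: "2 * L * int (card (pos_half_edges S)) \<le> W"
    and idx_bij: "bij_betw idx (pos_half_edges S) {..<card (pos_half_edges S)}"
begin

abbreviation P :: "(gam \<times> nat) set" where
  "P \<equiv> pos_half_edges S"

abbreviation flip :: gam where
  "flip \<equiv> (True, 0)"

lemma marker_borel [measurable]: "M \<in> sets borel"
  using marker by (simp add: marker_set_def)

lemma marker_sheet: "a (s, z) x \<in> M \<longleftrightarrow> a (False, z) x \<in> M"
proof -
  have "a flip (a (False, z) x) \<in> M \<longleftrightarrow> a (False, z) x \<in> M"
    using marker by (simp only: marker_set_def)
  then show ?thesis
    by (cases s) simp_all
qed

lemma marker_separated:
  assumes "a (False, z) x \<in> M" "a (False, z') x \<in> M" "\<bar>z - z'\<bar> < W"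
  shows "z = z'"
proof -
  have "a (False, z - z') (a (False, z') x) \<in> M"
    using assms(1) by simp
  then have "z - z' = 0 \<or> W \<le> \<bar>z - z'\<bar>"
    using marker assms(2) unfolding marker_set_def by (metis snd_conv)
  then show ?thesis
    using assms(3) by simp
qed

lemma marker_below: "\<exists>z < z0. a (False, z) x \<in> M"
proof -
  obtain g where g: "\<bar>snd g\<bar> < W" "a g (a (False, z0 - W) x) \<in> M"
    using marker unfolding marker_set_def by blast
  obtain s z where "g = (s, z)"
    by fastforce
  with g have "\<bar>z\<bar> < W" "a (s, z) (a (False, z0 - W) x) \<in> M"
    by simp_all
  then have "a (False, z + (z0 - W)) x \<in> M"
    using marker_sheet[of s "z + (z0 - W)" x] by simp
  then show ?thesis
    using \<open>\<bar>z\<bar> < W\<close> by (intro exI[of _ "z + (z0 - W)"]) simp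
qed

lemma idx_less: "p \<in> P \<Longrightarrow> idx p < card P"
  using idx_bij by (auto simp: bij_betw_def)

lemma idx_inj: "p \<in> P \<Longrightarrow> q \<in> P \<Longrightarrow> idx p = idx q \<Longrightarrow> p = q"
  using idx_bij by (auto simp: bij_betw_def inj_on_def)

definition shift :: "gam \<times> nat \<Rightarrow> int" where
  "shift p = snd (fst p)"

definition base :: "gam \<times> nat \<Rightarrow> int" where
  "base p = 2 * L * int (idx p)"

lemma shift_pos: "p \<in> P \<Longrightarrow> 0 < shift p"
  by (simp add: pos_half_edges_def shift_def)

lemma shift_le_L: "p \<in> P \<Longrightarrow> shift p \<le> L"
  using L_bound[of "fst p"]
  by (auto simp: pos_half_edges_def half_edges_def shift_def not_in_iff dest: gr_implies_not0)

text \<open>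
  Label \<open>p\<close> owns the offsets \<open>base p + [0, 2 shift p)\<close> above a marker: \<open>[0, shift p)\<close> locates the tail
  of a defect edge of label \<open>p\<close> and \<open>[shift p, 2 shift p)\<close> its head. These windows are disjoint and
  lie in \<open>[0, W)\<close>, so by the separation of markers a vertex meets at most one defect edge.
\<close>

definition defect :: "gam \<times> nat \<Rightarrow> 'x set" where
  "defect p = {x. \<exists>r\<in>{0..<shift p}. a (False, - (base p + r)) x \<in> M}"

definition backward :: "gam \<times> nat \<Rightarrow> 'x \<Rightarrow> 'x" where
  "backward p = a (ginv (fst p))"

\<comment> \<open>The half-edge of label \<open>p\<close> at \<open>x\<close>, outgoing if \<open>\<not> \<rho>\<close> and incoming if \<open>\<rho>\<close>, starts at \<open>tail x p \<rho>\<close>.\<close>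
definition tail :: "'x \<Rightarrow> gam \<times> nat \<Rightarrow> bool \<Rightarrow> 'x" where
  "tail x p \<rho> = (if \<rho> then backward p x else x)"

lemma backward_marker: "a (False, z) (backward p x) \<in> M \<longleftrightarrow> a (False, z - shift p) x \<in> M"
proof -
  obtain s n i where "p = ((s, n), i)"
    by (metis prod.collapse)
  then show ?thesis
    using marker_sheet[of s "z - n" x] by (simp add: backward_def shift_def)
qed

lemma defect_iff_offset:
  "x \<in> defect p \<longleftrightarrow> (\<exists>r\<in>{0..<2 * shift p}. \<not> shift p \<le> r \<and> a (False, - (base p + r)) x \<in> M)"
proof -
  have "{0..<shift p} = {r \<in> {0..<2 * shift p}. \<not> shift p \<le> r}"
    by auto
  then show ?thesis
    unfolding defect_def by blast
qed

lemma backward_defect_iff_offset: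
  "backward p x \<in> defect p \<longleftrightarrow> (\<exists>r\<in>{0..<2 * shift p}. shift p \<le> r \<and> a (False, - (base p + r)) x \<in> M)"
proof -
  have "backward p x \<in> defect p \<longleftrightarrow>
      (\<exists>r\<in>{0..<shift p}. a (False, - (base p + (r + shift p))) x \<in> M)"
    by (simp add: defect_def backward_marker algebra_simps)
  also have "\<dots> \<longleftrightarrow> (\<exists>r\<in>(\<lambda>r. r + shift p) ` {0..<shift p}. a (False, - (base p + r)) x \<in> M)"
    by blast
  also have "(\<lambda>r. r + shift p) ` {0..<shift p} = {r \<in> {0..<2 * shift p}. shift p \<le> r}"
    by auto
  finally show ?thesis
    by blast
qed

lemma tail_defect_iff:
  "tail x p \<rho> \<in> defect p \<longleftrightarrow>
    (\<exists>r\<in>{0..<2 * shift p}. (shift p \<le> r \<longleftrightarrow> \<rho>) \<and> a (False, - (base p + r)) x \<in> M)"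
  using defect_iff_offset[of x p] backward_defect_iff_offset[of p x] by (cases \<rho>) (simp_all add: tail_def)

lemma marker_offset_unique:
  assumes "p \<in> P" "q \<in> P" "r \<in> {0..<2 * shift p}" "r' \<in> {0..<2 * shift q}"
    and "a (False, - (base p + r)) x \<in> M" "a (False, - (base q + r')) x \<in> M"
  shows "p = q \<and> r = r'"
proof -
  have window: "0 \<le> base p + r \<and> base p + r < W \<and> (base p + r) div (2 * L) = int (idx p)"
    if "p \<in> P" "r \<in> {0..<2 * shift p}" for p r
  proof -
    have "0 < shift p" "shift p \<le> L"
      using shift_pos shift_le_L that(1) by auto
    have "int (idx p) + 1 \<le> int (card P)"
      using idx_less[OF that(1)] by simp
    then have "2 * L * (int (idx p) + 1) \<le> 2 * L * int (card P)"
      using \<open>0 < shift p\<close> \<open>shift p \<le> L\<close> by (intro mult_left_mono) simp_all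
    moreover have "r div (2 * L) = 0"
      using that(2) \<open>shift p \<le> L\<close> by (intro div_pos_pos_trivial) auto
    then have "(r + int (idx p) * (2 * L)) div (2 * L) = int (idx p)"
      using \<open>0 < shift p\<close> \<open>shift p \<le> L\<close> by simp
    moreover have "base p + r = r + int (idx p) * (2 * L)"
      by (simp add: base_def algebra_simps)
    ultimately show ?thesis
      using that(2) windows_le \<open>0 < shift p\<close> \<open>shift p \<le> L\<close> by (simp add: algebra_simps)
  qed
  have "\<bar>- (base p + r) - - (base q + r')\<bar> < W"
    using window[OF assms(1,3)] window[OF assms(2,4)] by linarith
  then have "- (base p + r) = - (base q + r')"
    by (rule marker_separated[OF assms(5,6)])
  then have offsets: "base p + r = base q + r'"
    by simp
  then have "int (idx p) = int (idx q)"
    using window[OF assms(1,3)] window[OF assms(2,4)] by metis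
  then have "p = q"
    using idx_inj assms(1,2) by simp
  then show ?thesis
    using offsets by simp
qed

lemma defect_unique:
  assumes "p \<in> P" "q \<in> P" "tail x p \<rho> \<in> defect p" "tail x q \<sigma> \<in> defect q"
  shows "p = q \<and> \<rho> = \<sigma>"
proof -
  obtain r r' where "r \<in> {0..<2 * shift p}" "shift p \<le> r \<longleftrightarrow> \<rho>" "a (False, - (base p + r)) x \<in> M"
    "r' \<in> {0..<2 * shift q}" "shift q \<le> r' \<longleftrightarrow> \<sigma>" "a (False, - (base q + r')) x \<in> M"
    using assms(3,4) unfolding tail_defect_iff by blast
  then show ?thesis
    using marker_offset_unique[OF assms(1,2)] by blast
qed

definition gap :: "gam \<times> nat \<Rightarrow> 'x \<Rightarrow> nat" where
  "gap p x = (LEAST d. (backward p ^^ Suc d) x \<in> defect p)"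

lemma defect_behind:
  assumes "p \<in> P"
  shows "\<exists>d. (backward p ^^ Suc d) x \<in> defect p"
proof -
  obtain s n i where p_eq: "p = ((s, n), i)"
    by (metis prod.collapse)
  then have n: "n = shift p" "0 < n"
    using shift_pos[OF assms] by (simp_all add: shift_def)
  obtain z where z: "z < - (base p + n)" "a (False, z) x \<in> M"
    using marker_below by blast
  define v where "v = - z - base p"
  define k where "k = v div n"
  define r where "r = v mod n"
  have "n div n \<le> k"
    unfolding k_def using z(1) n(2) by (intro zdiv_mono1) (simp_all add: v_def)
  then have "1 \<le> k"
    using n(2) by simp
  have r: "0 \<le> r" "r < n"
    using n(2) by (simp_all add: r_def)
  define d where "d = nat k - 1"
  have d: "int (Suc d) = k"
    using \<open>1 \<le> k\<close> by (simp add: d_def)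
  have "backward p = a (s, - n)"
    by (simp add: backward_def p_eq)
  then have funpow_eq: "(backward p ^^ Suc d) x = a (s \<and> odd (Suc d), - (k * n)) x"
    unfolding d[symmetric] by (simp only: act_funpow) simp
  have "k * n + r = v"
    using div_mult_mod_eq[of v n] by (simp add: k_def r_def)
  then have offset_eq: "- (base p + r) + - (k * n) = z"
    unfolding v_def by linarith
  have "a (False, - (base p + r)) ((backward p ^^ Suc d) x) = a (s \<and> odd (Suc d), z) x"
    unfolding funpow_eq offset_eq[symmetric] by simp
  then have "a (False, - (base p + r)) ((backward p ^^ Suc d) x) \<in> M"
    using z(2) marker_sheet[of _ z x] by simp
  then have "(backward p ^^ Suc d) x \<in> defect p"
    using r n(1) unfolding defect_def by (intro CollectI bexI[of _ r]) simp_all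
  then show ?thesis ..
qed

lemma gap_Suc: "p \<in> P \<Longrightarrow> backward p x \<notin> defect p \<Longrightarrow> gap p x = Suc (gap p (backward p x))"
  unfolding gap_def by (rule Least_funpow_Suc[OF defect_behind])

\<comment> \<open>The parity of \<open>gap\<close>, the distance back to the previous defect, alternates along a line.\<close>
definition edge_colour :: "gam \<times> nat \<Rightarrow> 'x \<Rightarrow> nat" where
  "edge_colour p x = (if x \<in> defect p then 2 * card P else 2 * idx p + gap p x mod 2)"

lemma edge_colour_le: "p \<in> P \<Longrightarrow> edge_colour p x \<le> 2 * card P"
  using idx_less[of p] by (auto simp: edge_colour_def)

lemma edge_colour_eq_iff: "p \<in> P \<Longrightarrow> edge_colour p x = 2 * card P \<longleftrightarrow> x \<in> defect p"
  using idx_less[of p] by (auto simp: edge_colour_def)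

lemma edge_colour_inj:
  assumes "p \<in> P" "q \<in> P" "edge_colour p (tail x p \<rho>) = edge_colour q (tail x q \<sigma>)"
  shows "p = q \<and> \<rho> = \<sigma>"
proof (cases "tail x p \<rho> \<in> defect p")
  case True
  then have "tail x q \<sigma> \<in> defect q"
    using assms edge_colour_eq_iff by metis
  then show ?thesis
    using defect_unique assms(1,2) True by blast
next
  case False
  then have "tail x q \<sigma> \<notin> defect q"
    using assms edge_colour_eq_iff by metis
  then have colours: "2 * idx p + gap p (tail x p \<rho>) mod 2 = 2 * idx q + gap q (tail x q \<sigma>) mod 2"
    using False assms(3) by (simp add: edge_colour_def)
  then have "idx p = idx q"
    by presburger
  then have "p = q"
    using idx_inj assms(1,2) by blast
  moreover have "\<rho> = \<sigma>"
  proof (rule ccontr)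
    assume "\<rho> \<noteq> \<sigma>"
    then have "x \<notin> defect p" "backward p x \<notin> defect p"
      and "gap p x mod 2 = gap p (backward p x) mod 2"
      using False \<open>tail x q \<sigma> \<notin> defect q\<close> colours \<open>p = q\<close> by (cases \<rho>; simp add: tail_def)+
    moreover have "gap p x = Suc (gap p (backward p x))"
      using gap_Suc[OF assms(1)] calculation(2) .
    moreover have "Suc m mod 2 \<noteq> m mod 2" for m :: nat
      by presburger
    ultimately show False
      by metis
  qed
  ultimately show ?thesis
    by blast
qed

\<comment> \<open>At \<open>(flip, 0)\<close> this may clash with the defect colour; \<open>colouring\<close> uses \<open>free_colour\<close> there.\<close>
definition half_colour :: "'x \<Rightarrow> gam \<Rightarrow> nat \<Rightarrow> nat" where
  "half_colour x h j =
    (if h = flip then 2 * card P + j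
     else if 0 < snd h then edge_colour (h, j) x else edge_colour (ginv h, j) (a h x))"

lemma count_ginv: "count S (ginv g) = count S g"
  using symmetric unfolding symmetric_mset_def by metis

lemma half_edge_cases:
  assumes "(h, j) \<in> half_edges S" "h \<noteq> flip"
  obtains "0 < snd h" "(h, j) \<in> P" | "snd h < 0" "(ginv h, j) \<in> P"
proof -
  obtain s z where h: "h = (s, z)"
    by fastforce
  have "h \<in># S"
    using assms(1) by (auto simp: half_edges_def not_in_iff dest: gr_implies_not0)
  then have "z \<noteq> 0"
    using one_notin assms(2) h by (cases s) (auto simp: gone_def)
  then consider "0 < z" | "z < 0"
    by linarith
  then show ?thesis
    using that assms(1) count_ginv[of h] h by cases (auto simp: pos_half_edges_def half_edges_def)
qed

lemma half_colour_eq_edge_colour: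
  assumes "(h, j) \<in> half_edges S" "h \<noteq> flip"
  obtains p \<rho> where "p \<in> P" "(h, j) = (if \<rho> then (ginv (fst p), snd p) else p)"
    and "half_colour x h j = edge_colour p (tail x p \<rho>)"
  using assms
proof (cases rule: half_edge_cases)
  case 1
  then show ?thesis
    using that[of "(h, j)" False] assms(2) by (simp add: half_colour_def tail_def)
next
  case 2
  then show ?thesis
    using that[of "(ginv h, j)" True] assms(2) by (simp add: half_colour_def tail_def backward_def)
qed

lemma half_colour_le: "(h, j) \<in> half_edges S \<Longrightarrow> h \<noteq> flip \<Longrightarrow> half_colour x h j \<le> 2 * card P"
  by (metis half_colour_eq_edge_colour edge_colour_le)

lemma half_colour_inj:
  assumes "(h, j) \<in> half_edges S - {(flip, 0)}" "(h', j') \<in> half_edges S - {(flip, 0)}"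
    and "half_colour x h j = half_colour x h' j'"
  shows "(h, j) = (h', j')"
proof (cases "h = flip \<or> h' = flip")
  case True
  have "2 * card P < half_colour x h j" if "h = flip" "(h, j) \<in> half_edges S - {(flip, 0)}" for h j
    using that by (simp add: half_colour_def)
  then show ?thesis
    using True assms half_colour_le[of h j x] half_colour_le[of h' j' x]
    by (cases "h = flip"; cases "h' = flip") (auto simp: half_colour_def)
next
  case False
  obtain p \<rho> where p: "p \<in> P" "(h, j) = (if \<rho> then (ginv (fst p), snd p) else p)"
    "half_colour x h j = edge_colour p (tail x p \<rho>)"
    using half_colour_eq_edge_colour assms(1) False by blast
  obtain q \<sigma> where q: "q \<in> P" "(h', j') = (if \<sigma> then (ginv (fst q), snd q) else q)"
    "half_colour x h' j' = edge_colour q (tail x q \<sigma>)"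
    using half_colour_eq_edge_colour assms(2) False by blast
  have "edge_colour p (tail x p \<rho>) = edge_colour q (tail x q \<sigma>)"
    using p(3) q(3) assms(3) by simp
  then have "p = q \<and> \<rho> = \<sigma>"
    by (rule edge_colour_inj[OF p(1) q(1)])
  then show ?thesis
    using p(2) q(2) by simp
qed

lemma card_P_le: "2 * card P + count S flip \<le> size S"
proof -
  let ?F = "{flip} \<times> {..<count S flip}" and ?N = "(\<lambda>(g, i). (ginv g, i)) ` P"
  have "inj_on (\<lambda>(g, i). (ginv g, i)) P"
    by (auto simp: inj_on_def)
  then have "card ?N = card P"
    by (rule card_image)
  moreover have "?F \<inter> P = {}" "(?F \<union> P) \<inter> ?N = {}"
    by (auto simp: pos_half_edges_def)
  ultimately have "card (?F \<union> P \<union> ?N) = count S flip + 2 * card P"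
    by (simp add: card_Un_disjoint card_cartesian_product)
  moreover have "?F \<union> P \<union> ?N \<subseteq> half_edges S"
    using count_ginv by (auto simp: half_edges_def pos_half_edges_def)
  then have "card (?F \<union> P \<union> ?N) \<le> size S"
    using card_mono[OF finite_half_edges] card_half_edges by metis
  ultimately show ?thesis
    by simp
qed

lemma count_flip_pos: "0 < count S flip"
  using flip_in by (simp only: count_greater_zero_iff)

lemma half_colour_less:
  assumes "(h, j) \<in> half_edges S"
  shows "half_colour x h j < size S"
proof (cases "h = flip")
  case True
  then show ?thesis
    using assms card_P_le by (simp add: half_colour_def half_edges_def)
next
  case False
  then have "half_colour x h j \<le> 2 * card P"
    using assms half_colour_le by blast
  then show ?thesis
    using card_P_le count_flip_pos by linarith
qed

lemma half_colour_reverse: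
  assumes "(h, j) \<in> half_edges S" "h \<noteq> flip"
  shows "half_colour (a h x) (ginv h) j = half_colour x h j"
proof -
  have "ginv h \<noteq> flip"
    using assms(2) by (metis ginv_ginv ginv_pair neg_0_equal_iff_equal)
  from assms show ?thesis
  proof (cases rule: half_edge_cases)
    case 1
    then have "\<not> 0 < snd (ginv h)"
      by (cases h) simp
    then show ?thesis
      using 1 assms(2) \<open>ginv h \<noteq> flip\<close> by (simp add: half_colour_def)
  next
    case 2
    then have "0 < snd (ginv h)"
      by (cases h) simp
    then show ?thesis
      using 2 assms(2) \<open>ginv h \<noteq> flip\<close> by (simp add: half_colour_def)
  qed
qed

lemma defect_flip: "a flip x \<in> defect p \<longleftrightarrow> x \<in> defect p"
  using marker_sheet[of True] by (simp add: defect_def)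

lemma backward_funpow_flip: "(backward p ^^ k) (a flip x) = a flip ((backward p ^^ k) x)"
  by (induction k) (simp_all add: backward_def act_commute[of "ginv (fst p)" flip])

lemma gap_flip: "gap p (a flip x) = gap p x"
  unfolding gap_def by (simp only: backward_funpow_flip defect_flip)

lemma half_colour_flip: "half_colour (a flip x) h j = half_colour x h j"
proof -
  have "edge_colour p (a flip y) = edge_colour p y" for p y
    by (simp add: edge_colour_def gap_flip defect_flip)
  then show ?thesis
    by (simp add: half_colour_def act_commute[of h flip])
qed

definition free_colour :: "'x \<Rightarrow> nat" where
  "free_colour x = (LEAST c. c \<notin> (\<lambda>(h, j). half_colour x h j) ` (half_edges S - {(flip, 0)}))"

lemma free_colour_less: "free_colour x < size S"
proof -
  let ?B = "(\<lambda>(h, j). half_colour x h j) ` (half_edges S - {(flip, 0)})"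
  have "(flip, 0) \<in> half_edges S"
    using count_flip_pos by (simp add: half_edges_def)
  then have "card (half_edges S - {(flip, 0)}) < size S"
    using card_Diff1_less[OF finite_half_edges] card_half_edges by metis
  moreover have "free_colour x \<le> card ?B"
    unfolding free_colour_def by (rule Least_not_in_le_card) simp
  moreover have "card ?B \<le> card (half_edges S - {(flip, 0)})"
    by (rule card_image_le) simp
  ultimately show ?thesis
    by linarith
qed

lemma free_colour_fresh:
  assumes "(h, j) \<in> half_edges S - {(flip, 0)}"
  shows "free_colour x \<noteq> half_colour x h j"
proof -
  let ?B = "(\<lambda>(h, j). half_colour x h j) ` (half_edges S - {(flip, 0)})"
  have "half_colour x h j \<in> ?B"
    using assms by (rule rev_image_eqI) simp
  moreover have "free_colour x \<notin> ?B"
    unfolding free_colour_def by (rule LeastI_not_in) simp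
  ultimately show ?thesis
    by metis
qed

definition colouring :: "'x \<Rightarrow> gam \<Rightarrow> nat \<Rightarrow> nat" where
  "colouring x h j = (if (h, j) = (flip, 0) then free_colour x else half_colour x h j)"

lemma colouring_flip: "colouring (a flip x) h j = colouring x h j"
  by (simp add: colouring_def free_colour_def half_colour_flip)

lemma defect_borel [measurable]: "defect p \<in> sets borel"
  unfolding defect_def by measurable

lemma gap_measurable [measurable]: "gap p \<in> measurable borel (count_space UNIV)"
  unfolding gap_def backward_def by measurable

lemma colouring_measurable: "(\<lambda>x. colouring x h j) \<in> measurable borel (count_space UNIV)"
proof -
  have [measurable]: "(\<lambda>x. half_colour x h j) \<in> measurable borel (count_space UNIV)" for h j
    unfolding half_colour_def edge_colour_def by measurable
  have "free_colour =
      (\<lambda>x. LEAST c. \<forall>hj\<in>half_edges S - {(flip, 0)}. half_colour x (fst hj) (snd hj) \<noteq> c)"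
    unfolding free_colour_def by (intro ext arg_cong[where f = Least]) force
  then have [measurable]: "free_colour \<in> measurable borel (count_space UNIV)"
    by (simp only:) measurable
  show ?thesis
    unfolding colouring_def by measurable
qed

lemma colouring_less: "(g, i) \<in> half_edges S \<Longrightarrow> colouring x g i < size S"
  using free_colour_less half_colour_less by (simp add: colouring_def)

lemma colouring_reverse:
  assumes "(g, i) \<in> half_edges S"
  shows "colouring (a g x) (ginv g) i = colouring x g i"
proof (cases "g = flip")
  case True
  then show ?thesis
    using colouring_flip by simp
next
  case False
  then have "ginv g \<noteq> flip"
    by (metis ginv_ginv ginv_pair neg_0_equal_iff_equal)
  then show ?thesis
    using False half_colour_reverse[OF assms False] by (simp add: colouring_def)
qed

lemma colouring_inj:
  assumes "(g, i) \<in> half_edges S" "(h, j) \<in> half_edges S" "(g, i) \<noteq> (h, j)"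
  shows "colouring x g i \<noteq> colouring x h j"
proof -
  consider "(g, i) = (flip, 0)" "(h, j) \<in> half_edges S - {(flip, 0)}"
    | "(h, j) = (flip, 0)" "(g, i) \<in> half_edges S - {(flip, 0)}"
    | "(g, i) \<in> half_edges S - {(flip, 0)}" "(h, j) \<in> half_edges S - {(flip, 0)}"
    using assms by blast
  then show ?thesis
  proof cases
    case 1
    then show ?thesis
      using free_colour_fresh[of h j x] by (auto simp: colouring_def)
  next
    case 2
    then show ?thesis
      using free_colour_fresh[of g i x] by (auto simp: colouring_def)
  next
    case 3
    then show ?thesis
      using half_colour_inj[of g i h j x] assms(3) by (auto simp: colouring_def)
  qed
qed

lemma colouring_is_borel_edge_coloring: "borel_edge_coloring a S (size S) colouring"
  unfolding borel_edge_coloring_def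
  using colouring_less colouring_reverse colouring_inj colouring_measurable
  by (simp add: half_edges_def)

end

theorem lemma11:
  fixes S :: "gam multiset" and a :: "gam \<Rightarrow> 'x::polish_space \<Rightarrow> 'x"
  assumes "symmetric_mset S"
    and "gone \<notin># S"
    and "gen_subgroup (set_mset S) = UNIV"
    and "borel_action a"
    and "free_action a"
    and "(True, 0) \<in># S"
  shows "borel_chromatic_index a S = enat (size S)"
proof -
  interpret gam_action a
    using assms(4) by unfold_locales
  define L where "L = (\<Sum>g\<in>set_mset S. \<bar>snd g\<bar>)"
  define W where "W = 2 * L * int (card (pos_half_edges S)) + 1"
  have "0 < W"
    by (simp add: W_def L_def sum_nonneg)
  then obtain M where "marker_set a W M"
    using marker_set_exists[OF assms(5)] by blast
  obtain idx where "bij_betw idx (pos_half_edges S) {..<card (pos_half_edges S)}"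
    using ex_bij_betw_finite_nat[OF finite_pos_half_edges] by (auto simp: atLeast0LessThan)
  moreover have "\<bar>snd g\<bar> \<le> L" if "g \<in># S" for g
    unfolding L_def using that by (intro member_le_sum) simp_all
  ultimately interpret marked_gam_action a S L W M idx
    using assms(1,2,6) \<open>marker_set a W M\<close> by unfold_locales (simp_all add: W_def)
  show ?thesis
    using colouring_is_borel_edge_coloring by (rule borel_chromatic_index_eq_size)
qed

end
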